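(* Let $G$ be the cdf of a continuous real random variable. For $(\lambda_1,\lambda_2)\in\mathbb{R}^2$ define $$F_{R18b}(x)=(1+\lambda_1+\lambda_2)G(x)-(\lambda_1+2\lambda_2)G^2(x)+\lambda_2G^3(x),\qquad F_G(x)=\lambda_1 G(x)+(\lambda_2-\lambda_1)G^2(x)+(1-\lambda_2)G^3(x).$$ Let $\mathscr{S}_{R18b}=\{(\lambda_1,\lambda_2): -1\le\lambda_1\le1,\ 0\le\lambda_2\le1\}$, $\mathscr{S}_{MR18b}=\{(\lambda_1,\lambda_2): -2\le\lambda_1\le1,\ -2\le\lambda_2\le1,\ -1\le\lambda_1+\lambda_2\le2\}$ and $\mathscr{S}_{MG}=\{(\lambda_1,\lambda_2):0\le\lambda_1\le3,\ 0\le\lambda_2\le3,\ 0\le\lambda_1+\lambda_2\le3\}$. Then: (i) For every $(\lambda_1,\lambda_2)\in\mathscr{S}_{R18b}$, $F_{R18b}$ is a cdf. (ii) For every $(\lambda_1,\lambda_2)\in\mathscr{S}_{MR18b}$, $F_{R18b}$ is a cdf. (iii) For every $(\lambda_1,\lambda_2)\in\mathscr{S}_{MR18b}$, $(1+\lambda_1+\lambda_2,1-\lambda_2)\in\mathscr{S}_{MG}$ and $F_{R18b}$ with parameters $(\lambda_1,\lambda_2)$ coincides with $F_G$ with parameters $(1+\lambda_1+\lambda_2,1-\lambda_2)$. (iv) For every $(\lambda_1,\lambda_2)\in\mathscr{S}_{MG}$, $(\lambda_1+\lambda_2-2,1-\lambda_2)\in\mathscr{S}_{MR18b}$ and $F_G$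 with parameters $(\lambda_1,\lambda_2)$ coincides with $F_{R18b}$ with parameters $(\lambda_1+\lambda_2-2,1-\lambda_2)$.
   Context: A cdf is a nondecreasing, right-continuous function $F:\mathbb{R}\to[0,1]$ with limits $0$ at $-\infty$ and $1$ at $+\infty$. $G^k(x)=(G(x))^k$. *)

theory Defs
  imports "HOL-Analysis.Analysis"
begin

text \<open>A cdf: nondecreasing, right-continuous, limits 0 at -infinity and 1 at +infinity
  (values in [0,1] follow but are stated explicitly as in the paper's definition).\<close>
definition is_cdf :: "(real \<Rightarrow> real) \<Rightarrow> bool" where
  "is_cdf F \<longleftrightarrow> mono F \<and> (\<forall>x. 0 \<le> F x \<and> F x \<le> 1) \<and>
     (\<forall>x. continuous (at_right x) F) \<and>
     (F \<longlongrightarrow> 0) at_bot \<and> (F \<longlongrightarrow> 1) at_top"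

definition F_R18b :: "real \<Rightarrow> real \<Rightarrow> (real \<Rightarrow> real) \<Rightarrow> real \<Rightarrow> real" where
  "F_R18b l1 l2 G x = (1 + l1 + l2) * G x - (l1 + 2 * l2) * (G x)^2 + l2 * (G x)^3"

definition F_G :: "real \<Rightarrow> real \<Rightarrow> (real \<Rightarrow> real) \<Rightarrow> real \<Rightarrow> real" where
  "F_G l1 l2 G x = l1 * G x + (l2 - l1) * (G x)^2 + (1 - l2) * (G x)^3"

definition S_R18b :: "(real \<times> real) set" where
  "S_R18b = {(l1, l2). -1 \<le> l1 \<and> l1 \<le> 1 \<and> 0 \<le> l2 \<and> l2 \<le> 1}"

definition S_MR18b :: "(real \<times> real) set" where
  "S_MR18b = {(l1, l2). -2 \<le> l1 \<and> l1 \<le> 1 \<and> -2 \<le> l2 \<and> l2 \<le> 1 \<and> -1 \<le> l1 + l2 \<and> l1 + l2 \<le> 2}"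

definition S_MG :: "(real \<times> real) set" where
  "S_MG = {(l1, l2). 0 \<le> l1 \<and> l1 \<le> 3 \<and> 0 \<le> l2 \<and> l2 \<le> 3 \<and> 0 \<le> l1 + l2 \<and> l1 + l2 \<le> 3}"

end

theory Submission
  imports Defs
begin

text \<open>Both families are G composed with the cubic
  p(t) = A t + (B - A) t^2 + (1 - B) t^3, which fixes 0 and 1, and any continuous map of [0,1]
  that is nondecreasing and fixes 0 and 1 turns a cdf into a cdf. Monotonicity of p for
  A, B \<ge> 0, A + B \<le> 3 is read off from the Bernstein form of its derivative,
  p'(t) = A (1 - t)^2 + 2 B t (1 - t) + (3 - A - B) t^2, whose coefficients are then all
  nonnegative. Equivalently, p is the mixture with weights A/3, B/3, (3 - A - B)/3 of the cdf
  transforms of the minimum, the median and the maximum of three independent draws from G.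
  The remaining claims are a linear change of parameters.\<close>

definition cubic_transmutation :: "real \<Rightarrow> real \<Rightarrow> real \<Rightarrow> real" where
  "cubic_transmutation A B t = A * t + (B - A) * t^2 + (1 - B) * t^3"

lemma is_cdf_comp:
  fixes G h :: "real \<Rightarrow> real"
  assumes G: "is_cdf G" and h_cont: "continuous_on UNIV h" and h_mono: "mono_on {0..1} h"
    and h0: "h 0 = 0" and h1: "h 1 = 1"
  shows "is_cdf (\<lambda>x. h (G x))"
proof -
  have G_mono: "mono G" and G01: "\<And>x. G x \<in> {0..1}"
    and G_right: "\<And>x. continuous (at_right x) G"
    and G_bot: "(G \<longlongrightarrow> 0) at_bot" and G_top: "(G \<longlongrightarrow> 1) at_top"
    using G by (auto simp: is_cdf_def)
  have h_isCont: "isCont h y" for y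
    using h_cont by (simp add: continuous_on_eq_continuous_at)
  have "mono (\<lambda>x. h (G x))"
    using G01 by (intro monoI mono_onD[OF h_mono]) (auto intro: monoD[OF G_mono])
  moreover have "0 \<le> h (G x) \<and> h (G x) \<le> 1" for x
    using mono_onD[OF h_mono, of 0 "G x"] mono_onD[OF h_mono, of "G x" 1] G01[of x] h0 h1
    by auto
  moreover have "continuous (at_right x) (\<lambda>x. h (G x))" for x
    using continuous_within_compose3[OF h_isCont G_right] .
  moreover have "((\<lambda>x. h (G x)) \<longlongrightarrow> 0) at_bot"
    using isCont_tendsto_compose[OF h_isCont G_bot] h0 by simp
  moreover have "((\<lambda>x. h (G x)) \<longlongrightarrow> 1) at_top"
    using isCont_tendsto_compose[OF h_isCont G_top] h1 by simp
  ultimately show ?thesis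
    unfolding is_cdf_def by blast
qed

lemma cubic_transmutation_has_derivative:
  "(cubic_transmutation A B has_real_derivative
      A * (1 - t)^2 + 2 * B * t * (1 - t) + (3 - A - B) * t^2) (at t)"
proof -
  have "(cubic_transmutation A B has_real_derivative
      A + (B - A) * (2 * t) + (1 - B) * (3 * t^2)) (at t)"
    unfolding cubic_transmutation_def [abs_def]
    by (auto intro!: derivative_eq_intros)
  moreover have "A + (B - A) * (2 * t) + (1 - B) * (3 * t^2)
      = A * (1 - t)^2 + 2 * B * t * (1 - t) + (3 - A - B) * t^2"
    by (simp add: algebra_simps power2_eq_square)
  ultimately show ?thesis
    by simp
qed

lemma cubic_transmutation_mono_on:
  assumes "0 \<le> A" "0 \<le> B" "A + B \<le> 3"
  shows "mono_on {0..1} (cubic_transmutation A B)"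
proof (rule mono_onI)
  fix s t :: real
  assume "s \<in> {0..1}" "t \<in> {0..1}" "s \<le> t"
  show "cubic_transmutation A B s \<le> cubic_transmutation A B t"
  proof (rule DERIV_nonneg_imp_nondecreasing[OF \<open>s \<le> t\<close>])
    fix u assume "s \<le> u" "u \<le> t"
    then have "0 \<le> A * (1 - u)^2 + 2 * B * u * (1 - u) + (3 - A - B) * u^2"
      using assms \<open>s \<in> {0..1}\<close> \<open>t \<in> {0..1}\<close>
      by (intro add_nonneg_nonneg mult_nonneg_nonneg) auto
    then show "\<exists>y. (cubic_transmutation A B has_real_derivative y) (at u) \<and> 0 \<le> y"
      using cubic_transmutation_has_derivative by blast
  qed
qed

lemma is_cdf_F_G:
  assumes "is_cdf G" "0 \<le> A" "0 \<le> B" "A + B \<le> 3"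
  shows "is_cdf (F_G A B G)"
proof -
  have "F_G A B G = (\<lambda>x. cubic_transmutation A B (G x))"
    by (simp add: fun_eq_iff F_G_def cubic_transmutation_def)
  moreover have "is_cdf (\<lambda>x. cubic_transmutation A B (G x))"
  proof (rule is_cdf_comp[OF assms(1)])
    show "continuous_on UNIV (cubic_transmutation A B)"
      unfolding cubic_transmutation_def [abs_def] by (intro continuous_intros)
    show "mono_on {0..1} (cubic_transmutation A B)"
      using assms(2-4) by (rule cubic_transmutation_mono_on)
  qed (simp_all add: cubic_transmutation_def)
  ultimately show ?thesis
    by simp
qed

lemma F_R18b_eq_F_G: "F_R18b l1 l2 G = F_G (1 + l1 + l2) (1 - l2) G"
  by (simp add: fun_eq_iff F_R18b_def F_G_def algebra_simps)

lemma F_G_eq_F_R18b: "F_G l1 l2 G = F_R18b (l1 + l2 - 2) (1 - l2) G"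
  by (simp add: fun_eq_iff F_R18b_def F_G_def algebra_simps)

lemma S_R18b_subset_S_MR18b: "S_R18b \<subseteq> S_MR18b"
  by (auto simp: S_R18b_def S_MR18b_def)

lemma S_MR18b_imp_S_MG: "(l1, l2) \<in> S_MR18b \<Longrightarrow> (1 + l1 + l2, 1 - l2) \<in> S_MG"
  by (simp add: S_MR18b_def S_MG_def)

lemma S_MG_imp_S_MR18b: "(l1, l2) \<in> S_MG \<Longrightarrow> (l1 + l2 - 2, 1 - l2) \<in> S_MR18b"
  by (simp add: S_MR18b_def S_MG_def)

lemma is_cdf_F_R18b:
  assumes "is_cdf G" "(l1, l2) \<in> S_MR18b"
  shows "is_cdf (F_R18b l1 l2 G)"
  using S_MR18b_imp_S_MG[OF assms(2)] unfolding F_R18b_eq_F_G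
  by (intro is_cdf_F_G[OF assms(1)]) (auto simp: S_MG_def)

text \<open>Right-continuity of G suffices.\<close>

theorem proposition4:
  fixes G :: "real \<Rightarrow> real"
  assumes "is_cdf G" and "continuous_on UNIV G"
  shows "(\<forall>l1 l2. (l1, l2) \<in> S_R18b \<longrightarrow> is_cdf (F_R18b l1 l2 G)) \<and>
         (\<forall>l1 l2. (l1, l2) \<in> S_MR18b \<longrightarrow> is_cdf (F_R18b l1 l2 G)) \<and>
         (\<forall>l1 l2. (l1, l2) \<in> S_MR18b \<longrightarrow>
           (1 + l1 + l2, 1 - l2) \<in> S_MG \<and> F_R18b l1 l2 G = F_G (1 + l1 + l2) (1 - l2) G) \<and>
         (\<forall>l1 l2. (l1, l2) \<in> S_MG \<longrightarrow>
           (l1 + l2 - 2, 1 - l2) \<in> S_MR18b \<and> F_G l1 l2 G = F_R18b (l1 + l2 - 2) (1 - l2) G)"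
proof (intro conjI allI impI)
  fix l1 l2 :: real
  show "is_cdf (F_R18b l1 l2 G)" if "(l1, l2) \<in> S_R18b"
    using that S_R18b_subset_S_MR18b by (intro is_cdf_F_R18b[OF assms(1)]) blast
  show "is_cdf (F_R18b l1 l2 G)" if "(l1, l2) \<in> S_MR18b"
    using that by (rule is_cdf_F_R18b[OF assms(1)])
  show "(1 + l1 + l2, 1 - l2) \<in> S_MG" if "(l1, l2) \<in> S_MR18b"
    using that by (rule S_MR18b_imp_S_MG)
  show "(l1 + l2 - 2, 1 - l2) \<in> S_MR18b" if "(l1, l2) \<in> S_MG"
    using that by (rule S_MG_imp_S_MR18b)
qed (rule F_R18b_eq_F_G F_G_eq_F_R18b)+

end
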